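(* Let $F$ be a finite field of characteristic $3$. Let $k\ge 0$ be an integer, $m=3k+1$, and $t$ an integer with $t^3\equiv 1\pmod m$ and $\gcd(m,t-1)=1$. Let $G=T_{3m}=\langle x,y\mid x^m=y^3=1,\ y^{-1}xy=x^t\rangle$ (of order $3m$), $FG$ its group algebra, and $H=\langle x\rangle$. Let $\mathcal{C}_1,\dots,\mathcal{C}_k$ be the conjugacy classes of $G$ contained in $\langle x\rangle\setminus\{1\}$ (there are exactly $k$ of them, each of the form $\{x^j,x^{jt},x^{jt^2}\}$), and let $\hat{\mathcal{C}}_i=\sum_{g\in\mathcal{C}_i}g\in FG$. Then $Z(\Delta(G,H))$ equals the $F$-linear span of $\hat{\mathcal{C}}_1,\dots,\hat{\mathcal{C}}_k$.
   Context: $\Delta(G,H)$ is the ideal of $FG$ generated by $\{h-1\mid h\in H\}$; $Z(R)$ denotes the center of a ring $R$. *)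

theory Defs
  imports "HOL-Number_Theory.Cong"
begin

text \<open>The element y^b x^a (0 <= a < m, 0 <= b < 3) is encoded as the pair (a, b).
  Since y^{-1} x y = x^t we have x^a y^d = y^d x^(a t^d), hence
  (y^b x^a)(y^d x^c) = y^(b+d) x^(a t^d + c).\<close>

definition T_carrier :: "int \<Rightarrow> (int \<times> int) set" where
  "T_carrier m = {0..<m} \<times> {0..<3}"

definition T_mult :: "int \<Rightarrow> int \<Rightarrow> int \<times> int \<Rightarrow> int \<times> int \<Rightarrow> int \<times> int" where
  "T_mult m t p q = ((fst p * t ^ nat (snd q) + fst q) mod m, (snd p + snd q) mod 3)"

definition T_one :: "int \<times> int" where
  "T_one = (0, 0)"

definition T_x :: "int \<Rightarrow> int \<times> int" where
  "T_x m = (1 mod m, 0)"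

definition T_y :: "int \<times> int" where
  "T_y = (0, 1)"

definition T_H :: "int \<Rightarrow> int \<Rightarrow> (int \<times> int) set" where
  "T_H m t = range (\<lambda>n::nat. (T_mult m t (T_x m) ^^ n) T_one)"

text \<open>Elements of FG: functions G -> F vanishing outside the carrier.\<close>
definition grp_alg :: "'g set \<Rightarrow> ('g \<Rightarrow> 'a::zero) set" where
  "grp_alg S = {f. \<forall>z. z \<notin> S \<longrightarrow> f z = 0}"

definition ga_mult :: "'g set \<Rightarrow> ('g \<Rightarrow> 'g \<Rightarrow> 'g) \<Rightarrow> ('g \<Rightarrow> 'a::comm_ring_1) \<Rightarrow> ('g \<Rightarrow> 'a) \<Rightarrow> ('g \<Rightarrow> 'a)" where
  "ga_mult S gmult f g = (\<lambda>z. \<Sum>p\<in>S \<times> S. if gmult (fst p) (snd p) = z then f (fst p) * g (snd p) else 0)"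

definition ga_elem :: "'g \<Rightarrow> ('g \<Rightarrow> 'a::comm_ring_1)" where
  "ga_elem g = (\<lambda>z. if z = g then 1 else 0)"

text \<open>Delta(G,H): the (two-sided) ideal of FG generated by {h - 1 | h in H}.\<close>
inductive_set Delta :: "'g set \<Rightarrow> ('g \<Rightarrow> 'g \<Rightarrow> 'g) \<Rightarrow> 'g \<Rightarrow> 'g set \<Rightarrow> ('g \<Rightarrow> 'a::comm_ring_1) set"
  for S gmult one H where
  gen: "h \<in> H \<Longrightarrow> (\<lambda>z. ga_elem h z - ga_elem one z) \<in> Delta S gmult one H"
| zero: "(\<lambda>z. 0) \<in> Delta S gmult one H"
| add: "u \<in> Delta S gmult one H \<Longrightarrow> v \<in> Delta S gmult one H \<Longrightarrow> (\<lambda>z. u z + v z) \<in> Delta S gmult one H"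
| lmult: "a \<in> grp_alg S \<Longrightarrow> u \<in> Delta S gmult one H \<Longrightarrow> ga_mult S gmult a u \<in> Delta S gmult one H"
| rmult: "a \<in> grp_alg S \<Longrightarrow> u \<in> Delta S gmult one H \<Longrightarrow> ga_mult S gmult u a \<in> Delta S gmult one H"

definition ga_center :: "'g set \<Rightarrow> ('g \<Rightarrow> 'g \<Rightarrow> 'g) \<Rightarrow> ('g \<Rightarrow> 'a::comm_ring_1) set \<Rightarrow> ('g \<Rightarrow> 'a) set" where
  "ga_center S gmult R = {z \<in> R. \<forall>r \<in> R. ga_mult S gmult z r = ga_mult S gmult r z}"

text \<open>Conjugacy class of g: all h^{-1} g h, i.e. all u in G with h u = g h for some h in G.\<close>
definition conj_class :: "'g set \<Rightarrow> ('g \<Rightarrow> 'g \<Rightarrow> 'g) \<Rightarrow> 'g \<Rightarrow> 'g set" where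
  "conj_class S gmult g = {u \<in> S. \<exists>h \<in> S. gmult h u = gmult g h}"

definition class_sum :: "'g set \<Rightarrow> ('g \<Rightarrow> 'a::comm_ring_1)" where
  "class_sum C = (\<lambda>z. if z \<in> C then 1 else 0)"

definition ga_span :: "'i set \<Rightarrow> ('i \<Rightarrow> 'g \<Rightarrow> 'a::comm_ring_1) \<Rightarrow> ('g \<Rightarrow> 'a) set" where
  "ga_span I v = {f. \<exists>c. f = (\<lambda>z. \<Sum>i\<in>I. c i * v i z)}"

end

theory Submission
  imports Defs "HOL-Algebra.Elementary_Groups"
begin

text \<open>Since \<open>|H| = m \<equiv> 1 (mod 3)\<close> is invertible in \<open>F\<close>, the element \<open>e = |H|\<inverse> \<Sum>H\<close> is
  defined. Elements of \<open>\<Delta>(G,H)\<close> have vanishing coefficient sums on the cosets of \<open>H\<close>, so \<open>e\<close>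
  annihilates \<open>\<Delta>(G,H)\<close> on both sides, while \<open>h(1 - e) \<in> \<Delta>(G,H)\<close> for every \<open>h \<in> G\<close>. Hence
  \<open>Z(\<Delta>(G,H))\<close> consists exactly of the class functions in \<open>\<Delta>(G,H)\<close>. Such a class function vanishes
  off \<open>H\<close>, because each coset \<open>y\<^sup>b H\<close> with \<open>b \<noteq> 0\<close> is a single conjugacy class whose
  coefficient sum is \<open>m\<close> times the common value; and it vanishes at \<open>1\<close>, because the
  coefficient sum over \<open>H\<close> is zero and the classes in \<open>H - {1}\<close> have size \<open>3 = 0\<close>. What is left is a
  combination of the class sums \<open>\<Sum>C\<close>, and these lie in \<open>\<Delta>(G,H)\<close> since \<open>\<Sum>C = \<Sum>g\<in>C. (g - 1)\<close>.\<close>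

section \<open>Group algebras\<close>

lemma ga_mult_diff_left:
  "ga_mult S gm (\<lambda>x. a x - b x) c w = ga_mult S gm a c w - ga_mult S gm b c w"
  unfolding ga_mult_def sum_subtractf[symmetric] by (rule sum.cong) (auto simp: left_diff_distrib)

lemma ga_mult_diff_right:
  "ga_mult S gm a (\<lambda>x. b x - c x) w = ga_mult S gm a b w - ga_mult S gm a c w"
  unfolding ga_mult_def sum_subtractf[symmetric] by (rule sum.cong) (auto simp: right_diff_distrib)

lemma ga_mult_scale_left: "ga_mult S gm (\<lambda>x. c * a x) b w = c * ga_mult S gm a b w"
  unfolding ga_mult_def sum_distrib_left by (rule sum.cong) (auto simp: mult.assoc)

lemma ga_mult_scale_right: "ga_mult S gm a (\<lambda>x. c * b x) w = c * ga_mult S gm a b w"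
  unfolding ga_mult_def sum_distrib_left by (rule sum.cong) (auto simp: mult_ac)

lemma Delta_sum:
  assumes "finite I" "\<And>i. i \<in> I \<Longrightarrow> v i \<in> Delta S gm e H"
  shows "(\<lambda>w. \<Sum>i\<in>I. v i w) \<in> Delta S gm e H"
  using assms
proof (induction I rule: finite_induct)
  case empty
  show ?case using Delta.zero by simp
next
  case (insert i I)
  then show ?case using Delta.add[of "v i" S gm e H "\<lambda>w. \<Sum>i\<in>I. v i w"] by simp
qed

lemma class_sum_in_Delta:
  assumes "finite C" "C \<subseteq> H" "of_nat (card C) = (0::'a::comm_ring_1)"
  shows "(class_sum C :: 'g \<Rightarrow> 'a) \<in> Delta S gm e H"
proof -
  have "class_sum C = (\<lambda>w. \<Sum>g\<in>C. ga_elem g w - ga_elem e w :: 'a)"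
    using assms by (auto simp: class_sum_def ga_elem_def sum_subtractf sum.delta')
  also have "\<dots> \<in> Delta S gm e H"
    using assms by (intro Delta_sum) (auto intro: Delta.gen)
  finally show ?thesis .
qed

definition class_function :: "('g, 'b) monoid_scheme \<Rightarrow> ('g \<Rightarrow> 'a) \<Rightarrow> bool" where
  "class_function G f \<longleftrightarrow> (\<forall>g\<in>carrier G. \<forall>h\<in>carrier G. f (inv\<^bsub>G\<^esub> h \<otimes>\<^bsub>G\<^esub> g \<otimes>\<^bsub>G\<^esub> h) = f g)"

lemma class_function_lincomb:
  "(\<And>i. i \<in> I \<Longrightarrow> class_function G (v i)) \<Longrightarrow> class_function G (\<lambda>w. \<Sum>i\<in>I. c i * v i w)"
  unfolding class_function_def by simp

locale finite_group = group +
  assumes finite_carrier: "finite (carrier G)"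
begin

lemma mult_inv_cancel_left [simp]: "x \<in> carrier G \<Longrightarrow> y \<in> carrier G \<Longrightarrow> x \<otimes> (inv x \<otimes> y) = y"
  by (simp add: m_assoc[symmetric])

lemma inv_mult_cancel_left [simp]: "x \<in> carrier G \<Longrightarrow> y \<in> carrier G \<Longrightarrow> inv x \<otimes> (x \<otimes> y) = y"
  by (simp add: m_assoc[symmetric])

lemma ga_mult_outside: "w \<notin> carrier G \<Longrightarrow> ga_mult (carrier G) (\<otimes>) a b w = 0"
  unfolding ga_mult_def by (auto intro!: sum.neutral)

lemma ga_mult_in_grp_alg: "ga_mult (carrier G) (\<otimes>) a b \<in> grp_alg (carrier G)"
  using ga_mult_outside unfolding grp_alg_def by blast

lemma ga_mult_eq_sum_left:
  assumes "w \<in> carrier G"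
  shows "ga_mult (carrier G) (\<otimes>) a b w = (\<Sum>q\<in>carrier G. a q * b (inv q \<otimes> w))"
  unfolding ga_mult_def sum.cartesian_product' fst_conv snd_conv
proof (rule sum.cong[OF refl])
  fix q assume q: "q \<in> carrier G"
  have "(\<Sum>r\<in>carrier G. if q \<otimes> r = w then a q * b r else 0)
      = (\<Sum>r\<in>carrier G. if r = inv q \<otimes> w then a q * b r else 0)"
    using q assms by (intro sum.cong) (auto simp: inv_solve_left)
  then show "(\<Sum>r\<in>carrier G. if q \<otimes> r = w then a q * b r else 0)
      = a q * b (inv q \<otimes> w)"
    using q assms finite_carrier by (simp add: sum.delta)
qed

lemma ga_mult_eq_sum_right:
  assumes "w \<in> carrier G"
  shows "ga_mult (carrier G) (\<otimes>) a b w = (\<Sum>q\<in>carrier G. a (w \<otimes> inv q) * b q)"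
  unfolding ga_mult_def sum.cartesian_product' fst_conv snd_conv
proof (subst sum.swap, rule sum.cong[OF refl])
  fix q assume q: "q \<in> carrier G"
  have "(\<Sum>p\<in>carrier G. if p \<otimes> q = w then a p * b q else 0)
      = (\<Sum>p\<in>carrier G. if p = w \<otimes> inv q then a p * b q else 0)"
    using q assms by (intro sum.cong) (auto simp: inv_solve_right)
  then show "(\<Sum>p\<in>carrier G. if p \<otimes> q = w then a p * b q else 0) = a (w \<otimes> inv q) * b q"
    using q assms finite_carrier by (simp add: sum.delta)
qed

lemma ga_mult_assoc:
  "ga_mult (carrier G) (\<otimes>) (ga_mult (carrier G) (\<otimes>) a b) c
     = ga_mult (carrier G) (\<otimes>) a (ga_mult (carrier G) (\<otimes>) b c)"
proof
  fix w
  show "ga_mult (carrier G) (\<otimes>) (ga_mult (carrier G) (\<otimes>) a b) c w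
      = ga_mult (carrier G) (\<otimes>) a (ga_mult (carrier G) (\<otimes>) b c) w"
  proof (cases "w \<in> carrier G")
    case True
    have "ga_mult (carrier G) (\<otimes>) (ga_mult (carrier G) (\<otimes>) a b) c w
        = (\<Sum>q\<in>carrier G. ga_mult (carrier G) (\<otimes>) a b (w \<otimes> inv q) * c q)"
      using True by (rule ga_mult_eq_sum_right)
    also have "\<dots> = (\<Sum>q\<in>carrier G. \<Sum>p\<in>carrier G. a p * (b (inv p \<otimes> w \<otimes> inv q) * c q))"
      using True by (intro sum.cong) (simp_all add: ga_mult_eq_sum_left sum_distrib_right m_assoc mult.assoc)
    also have "\<dots> = (\<Sum>p\<in>carrier G. a p * ga_mult (carrier G) (\<otimes>) b c (inv p \<otimes> w))"
      using True by (subst sum.swap) (simp add: ga_mult_eq_sum_right sum_distrib_left)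
    also have "\<dots> = ga_mult (carrier G) (\<otimes>) a (ga_mult (carrier G) (\<otimes>) b c) w"
      using True by (rule ga_mult_eq_sum_left[symmetric])
    finally show ?thesis .
  qed (simp add: ga_mult_outside)
qed

lemma ga_mult_ga_elem_left:
  assumes "h \<in> carrier G" "w \<in> carrier G"
  shows "ga_mult (carrier G) (\<otimes>) (ga_elem h) a w = a (inv h \<otimes> w)"
proof -
  have "ga_mult (carrier G) (\<otimes>) (ga_elem h) a w = (\<Sum>q\<in>carrier G. if q = h then a (inv q \<otimes> w) else 0)"
    unfolding ga_mult_eq_sum_left[OF assms(2)] by (intro sum.cong) (auto simp: ga_elem_def)
  then show ?thesis
    using assms finite_carrier by (simp add: sum.delta)
qed

lemma ga_mult_ga_elem_right:
  assumes "h \<in> carrier G" "w \<in> carrier G"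
  shows "ga_mult (carrier G) (\<otimes>) a (ga_elem h) w = a (w \<otimes> inv h)"
proof -
  have "ga_mult (carrier G) (\<otimes>) a (ga_elem h) w = (\<Sum>q\<in>carrier G. if q = h then a (w \<otimes> inv q) else 0)"
    unfolding ga_mult_eq_sum_right[OF assms(2)] by (intro sum.cong) (auto simp: ga_elem_def)
  then show ?thesis
    using assms finite_carrier by (simp add: sum.delta)
qed

lemma ga_mult_one_left:
  assumes "a \<in> grp_alg (carrier G)"
  shows "ga_mult (carrier G) (\<otimes>) (ga_elem \<one>) a = a"
proof
  fix w
  show "ga_mult (carrier G) (\<otimes>) (ga_elem \<one>) a w = a w"
    using assms by (cases "w \<in> carrier G") (auto simp: ga_mult_ga_elem_left ga_mult_outside grp_alg_def)
qed

lemma ga_mult_one_right: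
  assumes "a \<in> grp_alg (carrier G)"
  shows "ga_mult (carrier G) (\<otimes>) a (ga_elem \<one>) = a"
proof
  fix w
  show "ga_mult (carrier G) (\<otimes>) a (ga_elem \<one>) w = a w"
    using assms by (cases "w \<in> carrier G") (auto simp: ga_mult_ga_elem_right ga_mult_outside grp_alg_def)
qed

section \<open>Conjugacy classes and class functions\<close>

lemma class_function_central:
  assumes "class_function G f"
  shows "ga_mult (carrier G) (\<otimes>) f r = ga_mult (carrier G) (\<otimes>) r f"
proof
  fix w
  show "ga_mult (carrier G) (\<otimes>) f r w = ga_mult (carrier G) (\<otimes>) r f w"
  proof (cases "w \<in> carrier G")
    case True
    have "f (w \<otimes> inv q) = f (inv q \<otimes> w)" if "q \<in> carrier G" for q
      using assms that True unfolding class_function_def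
      by (metis (no_types) inv_closed m_closed inv_solve_right' m_assoc)
    then show ?thesis
      unfolding ga_mult_eq_sum_right[OF True, of f r] ga_mult_eq_sum_left[OF True, of r f]
      by (intro sum.cong) (simp_all add: mult.commute)
  qed (simp add: ga_mult_outside)
qed

lemma class_function_if_commutes_with_ga_elem:
  assumes "\<And>h. h \<in> carrier G \<Longrightarrow>
    ga_mult (carrier G) (\<otimes>) f (ga_elem h) = ga_mult (carrier G) (\<otimes>) (ga_elem h) f"
  shows "class_function G f"
  unfolding class_function_def
proof (intro ballI)
  fix g h assume g: "g \<in> carrier G" and h: "h \<in> carrier G"
  have "ga_mult (carrier G) (\<otimes>) f (ga_elem h) (g \<otimes> h) = ga_mult (carrier G) (\<otimes>) (ga_elem h) f (g \<otimes> h)"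
    using assms h by simp
  then show "f (inv h \<otimes> g \<otimes> h) = f g"
    using g h by (simp add: ga_mult_ga_elem_left ga_mult_ga_elem_right m_assoc)
qed

lemma mem_conj_class_iff:
  assumes "g \<in> carrier G"
  shows "u \<in> conj_class (carrier G) (\<otimes>) g \<longleftrightarrow> (\<exists>h\<in>carrier G. u = inv h \<otimes> g \<otimes> h)"
proof -
  have "h \<otimes> u = g \<otimes> h \<longleftrightarrow> u = inv h \<otimes> g \<otimes> h" if "h \<in> carrier G" "u \<in> carrier G" for h
    using that assms inv_solve_left[of u h "g \<otimes> h"] by (auto simp: m_assoc)
  then show ?thesis
    unfolding conj_class_def using assms by auto
qed

lemma conj_class_self: "g \<in> carrier G \<Longrightarrow> g \<in> conj_class (carrier G) (\<otimes>) g"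
  by (auto simp: mem_conj_class_iff intro!: bexI[of _ \<one>])

lemma conj_class_eq_if_mem:
  assumes g: "g \<in> carrier G" and u: "u \<in> conj_class (carrier G) (\<otimes>) g"
  shows "conj_class (carrier G) (\<otimes>) u = conj_class (carrier G) (\<otimes>) g"
proof -
  obtain h where h: "h \<in> carrier G" and u_eq: "u = inv h \<otimes> g \<otimes> h"
    using u g by (auto simp: mem_conj_class_iff)
  have u_carrier: "u \<in> carrier G" using g h u_eq by simp
  have "inv k \<otimes> u \<otimes> k = inv (h \<otimes> k) \<otimes> g \<otimes> (h \<otimes> k)" if "k \<in> carrier G" for k
    using that g h by (simp add: u_eq inv_mult_group m_assoc)
  moreover have "inv k \<otimes> g \<otimes> k = inv (inv h \<otimes> k) \<otimes> u \<otimes> (inv h \<otimes> k)" if "k \<in> carrier G" for k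
    using that g h by (simp add: u_eq inv_mult_group m_assoc)
  ultimately show ?thesis
    unfolding set_eq_iff mem_conj_class_iff[OF g] mem_conj_class_iff[OF u_carrier]
    using h by (metis m_closed inv_closed)
qed

lemma mem_conj_class_iff_eq:
  assumes "g \<in> carrier G" "u \<in> carrier G"
  shows "u \<in> conj_class (carrier G) (\<otimes>) g \<longleftrightarrow> conj_class (carrier G) (\<otimes>) u = conj_class (carrier G) (\<otimes>) g"
  using assms conj_class_eq_if_mem conj_class_self by blast

lemma conj_classes_disjoint:
  assumes "g1 \<in> carrier G" "g2 \<in> carrier G"
    "conj_class (carrier G) (\<otimes>) g1 \<noteq> conj_class (carrier G) (\<otimes>) g2"
  shows "conj_class (carrier G) (\<otimes>) g1 \<inter> conj_class (carrier G) (\<otimes>) g2 = {}"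
proof -
  have False if "x \<in> conj_class (carrier G) (\<otimes>) g1" "x \<in> conj_class (carrier G) (\<otimes>) g2" for x
  proof -
    have "x \<in> carrier G" using that(1) by (simp add: conj_class_def)
    then show False using that assms mem_conj_class_iff_eq by metis
  qed
  then show ?thesis by blast
qed

lemma finite_conj_class: "finite (conj_class (carrier G) (\<otimes>) g)"
  by (rule finite_subset[OF _ finite_carrier]) (auto simp: conj_class_def)

lemma finite_conj_classes:
  assumes "A \<subseteq> carrier G"
  shows "finite {C. \<exists>g\<in>A. C = conj_class (carrier G) (\<otimes>) g}"
proof -
  have "{C. \<exists>g\<in>A. C = conj_class (carrier G) (\<otimes>) g} = (\<lambda>g. conj_class (carrier G) (\<otimes>) g) ` A"
    by blast
  then show ?thesis using assms finite_carrier finite_subset by fastforce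
qed

lemma class_function_eq_on_conj_class:
  "class_function G f \<Longrightarrow> g \<in> carrier G \<Longrightarrow> u \<in> conj_class (carrier G) (\<otimes>) g \<Longrightarrow> f u = f g"
  by (auto simp: mem_conj_class_iff class_function_def)

lemma class_function_class_sum_conj_class:
  assumes "g \<in> carrier G"
  shows "class_function G (class_sum (conj_class (carrier G) (\<otimes>) g))"
  unfolding class_function_def class_sum_def
proof (intro ballI)
  fix u h assume u: "u \<in> carrier G" and h: "h \<in> carrier G"
  have "conj_class (carrier G) (\<otimes>) (inv h \<otimes> u \<otimes> h) = conj_class (carrier G) (\<otimes>) u"
    using u h by (intro conj_class_eq_if_mem) (auto simp: mem_conj_class_iff)
  then show "(if inv h \<otimes> u \<otimes> h \<in> conj_class (carrier G) (\<otimes>) g then 1 else 0) =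
             (if u \<in> conj_class (carrier G) (\<otimes>) g then 1 else 0)"
    using assms u h by (simp add: mem_conj_class_iff_eq)
qed

lemma conj_class_subset_normal:
  assumes "H \<lhd> G" "g \<in> H - {\<one>}"
  shows "conj_class (carrier G) (\<otimes>) g \<subseteq> H - {\<one>}"
proof
  fix u assume u: "u \<in> conj_class (carrier G) (\<otimes>) g"
  have gH: "g \<in> H" "g \<noteq> \<one>" using assms(2) by auto
  have g: "g \<in> carrier G" using assms(1) gH(1) normal_imp_subgroup subgroup.mem_carrier by metis
  obtain h where h: "h \<in> carrier G" "u = inv h \<otimes> g \<otimes> h"
    using u g by (auto simp: mem_conj_class_iff)
  have "u \<in> H" using assms(1) gH(1) h by (simp add: normal.inv_op_closed1)
  moreover have "g = h \<otimes> u \<otimes> inv h" using g h by (simp add: m_assoc)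
  then have "u \<noteq> \<one>" using gH(2) h by auto
  ultimately show "u \<in> H - {\<one>}" by blast
qed

lemma Union_conj_classes:
  assumes "A \<subseteq> carrier G" "\<And>g. g \<in> A \<Longrightarrow> conj_class (carrier G) (\<otimes>) g \<subseteq> A"
  shows "\<Union>{C. \<exists>g\<in>A. C = conj_class (carrier G) (\<otimes>) g} = A"
proof
  show "\<Union>{C. \<exists>g\<in>A. C = conj_class (carrier G) (\<otimes>) g} \<subseteq> A" using assms(2) by blast
  show "A \<subseteq> \<Union>{C. \<exists>g\<in>A. C = conj_class (carrier G) (\<otimes>) g}" using assms(1) conj_class_self by blast
qed

lemma card_conj_classes:
  assumes A: "A \<subseteq> carrier G" "\<And>g. g \<in> A \<Longrightarrow> conj_class (carrier G) (\<otimes>) g \<subseteq> A"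
    and card: "\<And>g. g \<in> A \<Longrightarrow> card (conj_class (carrier G) (\<otimes>) g) = n"
  shows "n * card {C. \<exists>g\<in>A. C = conj_class (carrier G) (\<otimes>) g} = card A"
proof -
  let ?Cls = "{C. \<exists>g\<in>A. C = conj_class (carrier G) (\<otimes>) g}"
  have "\<forall>C1\<in>?Cls. \<forall>C2\<in>?Cls. C1 \<noteq> C2 \<longrightarrow> C1 \<inter> C2 = {}"
    using A(1) conj_classes_disjoint by blast
  then have "n * card ?Cls = card (\<Union>?Cls)"
    using card_partition[of ?Cls n] finite_conj_classes[OF A(1)] finite_conj_class card by blast
  then show ?thesis by (simp add: Union_conj_classes[OF A])
qed

lemma sum_class_function_eq_zero:
  fixes z :: "'a \<Rightarrow> 'k::comm_ring_1"
  assumes A: "A \<subseteq> carrier G" "\<And>g. g \<in> A \<Longrightarrow> conj_class (carrier G) (\<otimes>) g \<subseteq> A"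
    and card_classes: "\<And>g. g \<in> A \<Longrightarrow> of_nat (card (conj_class (carrier G) (\<otimes>) g)) = (0::'k)"
    and z: "class_function G z"
  shows "(\<Sum>g\<in>A. z g) = 0"
proof -
  let ?Cls = "{C. \<exists>g\<in>A. C = conj_class (carrier G) (\<otimes>) g}"
  have finite: "\<forall>C\<in>?Cls. finite C" using finite_conj_class by blast
  have disjoint: "\<forall>C1\<in>?Cls. \<forall>C2\<in>?Cls. C1 \<noteq> C2 \<longrightarrow> C1 \<inter> C2 = {}"
    using A(1) conj_classes_disjoint by blast
  have class_sum_zero: "(\<Sum>x\<in>C. z x) = 0" if C: "C \<in> ?Cls" for C
  proof -
    obtain g where g: "g \<in> A" "C = conj_class (carrier G) (\<otimes>) g" using C by blast
    then have "(\<Sum>x\<in>C. z x) = (\<Sum>x\<in>C. z g)"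
      using A(1) z class_function_eq_on_conj_class by (intro sum.cong) auto
    then show ?thesis using card_classes g by simp
  qed
  have "(\<Sum>g\<in>A. z g) = (\<Sum>g\<in>\<Union>?Cls. z g)" by (simp add: Union_conj_classes[OF A])
  also have "\<dots> = (\<Sum>C\<in>?Cls. \<Sum>x\<in>C. z x)"
    using sum.Union_disjoint[OF finite disjoint] by simp
  also have "\<dots> = 0"
    using class_sum_zero by (intro sum.neutral) blast
  finally show ?thesis .
qed

lemma class_function_in_span_class_sums:
  assumes A: "A \<subseteq> carrier G" "\<And>g. g \<in> A \<Longrightarrow> conj_class (carrier G) (\<otimes>) g \<subseteq> A"
    and z: "class_function G z" "\<And>w. w \<notin> A \<Longrightarrow> z w = 0"
  shows "z \<in> ga_span {C. \<exists>g\<in>A. C = conj_class (carrier G) (\<otimes>) g} class_sum"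
proof -
  let ?Cls = "{C. \<exists>g\<in>A. C = conj_class (carrier G) (\<otimes>) g}"
  have fin: "finite ?Cls" using finite_conj_classes[OF A(1)] .
  define c where "c C = z (SOME g. g \<in> C)" for C
  have "z w = (\<Sum>C\<in>?Cls. c C * class_sum C w)" for w
  proof (cases "w \<in> A")
    case True
    have "c C * class_sum C w = (if C = conj_class (carrier G) (\<otimes>) w then z w else 0)"
      if C: "C \<in> ?Cls" for C
    proof -
      obtain g where g: "g \<in> A" "C = conj_class (carrier G) (\<otimes>) g" using C by blast
      have "(SOME x. x \<in> conj_class (carrier G) (\<otimes>) w) \<in> conj_class (carrier G) (\<otimes>) w"
        using A(1) True conj_class_self by (meson someI subsetD)
      then have "c (conj_class (carrier G) (\<otimes>) w) = z w"
        unfolding c_def using A(1) True z(1) class_function_eq_on_conj_class by blast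
      then show ?thesis
        using g A(1) True mem_conj_class_iff_eq[of g w] by (auto simp: class_sum_def)
    qed
    then have "(\<Sum>C\<in>?Cls. c C * class_sum C w)
        = (\<Sum>C\<in>?Cls. if C = conj_class (carrier G) (\<otimes>) w then z w else 0)"
      by (intro sum.cong) auto
    then show ?thesis using fin True by (auto simp: sum.delta)
  next
    case False
    then have outside: "class_sum C w = 0" if "C \<in> ?Cls" for C
      using that A(2) by (auto simp: class_sum_def)
    have "(\<Sum>C\<in>?Cls. c C * class_sum C w) = 0"
      by (intro sum.neutral ballI) (simp add: outside)
    then show ?thesis using False z(2) by simp
  qed
  then show ?thesis unfolding ga_span_def by blast
qed

section \<open>The ideal \<open>\<Delta>(G,H)\<close> of a normal subgroup and its centre\<close>

lemma Delta_subset_grp_alg: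
  assumes "H \<subseteq> carrier G"
  shows "Delta (carrier G) (\<otimes>) \<one> H \<subseteq> grp_alg (carrier G)"
proof
  fix u assume "u \<in> Delta (carrier G) (\<otimes>) \<one> H"
  then show "u \<in> grp_alg (carrier G)"
    by induction (use assms in \<open>auto simp: grp_alg_def ga_elem_def ga_mult_outside\<close>)
qed

lemma Delta_scale:
  assumes "H \<subseteq> carrier G" "u \<in> Delta (carrier G) (\<otimes>) \<one> H"
  shows "(\<lambda>w. c * u w) \<in> Delta (carrier G) (\<otimes>) \<one> H"
proof -
  have "(\<lambda>x. c * ga_elem \<one> x) \<in> grp_alg (carrier G)"
    by (simp add: grp_alg_def ga_elem_def)
  moreover have "u \<in> grp_alg (carrier G)"
    using assms Delta_subset_grp_alg by blast
  then have "ga_mult (carrier G) (\<otimes>) (\<lambda>x. c * ga_elem \<one> x) u = (\<lambda>w. c * u w)"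
    by (intro ext) (simp add: ga_mult_scale_left ga_mult_one_left)
  ultimately show ?thesis
    using Delta.lmult assms(2) by metis
qed

lemma sum_subgroup_inv: "subgroup H G \<Longrightarrow> (\<Sum>h\<in>H. f (inv h)) = (\<Sum>h\<in>H. f h)"
  by (rule sum.reindex_bij_witness[of _ "\<lambda>h. inv h" "\<lambda>h. inv h"]) (auto simp: subgroup.mem_carrier subgroup.m_inv_closed)

lemma sum_normal_subgroup_commute:
  assumes "H \<lhd> G" "g \<in> carrier G"
  shows "(\<Sum>h\<in>H. f (h \<otimes> g)) = (\<Sum>h\<in>H. f (g \<otimes> h))"
proof (rule sum.reindex_bij_witness[of _ "\<lambda>h. g \<otimes> h \<otimes> inv g" "\<lambda>h. inv g \<otimes> h \<otimes> g"])
  have HG: "\<And>h. h \<in> H \<Longrightarrow> h \<in> carrier G"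
    using assms(1) normal_imp_subgroup subgroup.mem_carrier by metis
  fix h assume h: "h \<in> H"
  show "g \<otimes> (inv g \<otimes> h \<otimes> g) \<otimes> inv g = h" "inv g \<otimes> (g \<otimes> h \<otimes> inv g) \<otimes> g = h"
    "f (g \<otimes> (inv g \<otimes> h \<otimes> g)) = f (h \<otimes> g)"
    using HG[OF h] assms(2) by (simp_all add: m_assoc)
  show "inv g \<otimes> h \<otimes> g \<in> H" "g \<otimes> h \<otimes> inv g \<in> H"
    using assms h by (simp_all add: normal.inv_op_closed1 normal.inv_op_closed2)
qed

lemma sum_ga_elem_coset:
  assumes "subgroup H G" "g \<in> carrier G" "x \<in> carrier G"
  shows "(\<Sum>h\<in>H. ga_elem x (g \<otimes> h)) = (if inv g \<otimes> x \<in> H then 1 else 0)"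
proof -
  have H: "finite H" "H \<subseteq> carrier G"
    using assms(1) finite_carrier subgroup.subset finite_subset by metis+
  have "(\<Sum>h\<in>H. ga_elem x (g \<otimes> h)) = (\<Sum>h\<in>H. if h = inv g \<otimes> x then 1 else 0)"
    using H(2) assms(2,3) by (intro sum.cong) (auto simp: ga_elem_def inv_solve_left)
  then show ?thesis using H(1) by simp
qed

text \<open>\<open>\<Delta>(G,H)\<close> lies in the kernel of the projection \<open>FG \<rightarrow> F[G/H]\<close>.\<close>
lemma Delta_coset_sum_eq_zero:
  assumes "H \<lhd> G" "u \<in> Delta (carrier G) (\<otimes>) \<one> H" "g \<in> carrier G"
  shows "(\<Sum>h\<in>H. u (g \<otimes> h)) = 0"
proof -
  have sub: "subgroup H G" using assms(1) by (rule normal_imp_subgroup)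
  then have HG: "H \<subseteq> carrier G" by (rule subgroup.subset)
  from assms(2,3) show ?thesis
  proof (induction arbitrary: g rule: Delta.induct)
    case (gen h0 g)
    have h0: "h0 \<in> H" "h0 \<in> carrier G" using gen HG by auto
    have "inv g = inv g \<otimes> h0 \<otimes> inv h0" using h0 gen by (simp add: m_assoc)
    then have "inv g \<otimes> h0 \<in> H \<longleftrightarrow> inv g \<in> H"
      using sub h0 by (metis subgroup.m_closed subgroup.m_inv_closed)
    then show ?case
      using sub gen HG by (simp add: sum_subtractf sum_ga_elem_coset subsetD)
  next
    case zero
    show ?case by simp
  next
    case (add u v g)
    then show ?case by (simp add: sum.distrib)
  next
    case (lmult a u g)
    have "(\<Sum>h\<in>H. ga_mult (carrier G) (\<otimes>) a u (g \<otimes> h))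
        = (\<Sum>q\<in>carrier G. a q * (\<Sum>h\<in>H. u (inv q \<otimes> g \<otimes> h)))"
      using lmult.prems HG by (simp add: ga_mult_eq_sum_left subsetD sum_distrib_left m_assoc sum.swap[of _ H])
    then show ?case using lmult by simp
  next
    case (rmult a u g)
    have "(\<Sum>h\<in>H. u (g \<otimes> (h \<otimes> inv q))) = (\<Sum>h\<in>H. u (g \<otimes> inv q \<otimes> h))" if "q \<in> carrier G" for q
      using sum_normal_subgroup_commute[OF assms(1), of "inv q" "\<lambda>x. u (g \<otimes> x)"] that rmult.prems HG
      by (simp add: m_assoc subsetD)
    moreover have "(\<Sum>h\<in>H. ga_mult (carrier G) (\<otimes>) u a (g \<otimes> h))
        = (\<Sum>q\<in>carrier G. (\<Sum>h\<in>H. u (g \<otimes> (h \<otimes> inv q))) * a q)"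
      using rmult.prems HG by (simp add: ga_mult_eq_sum_right subsetD sum_distrib_right m_assoc sum.swap[of _ H])
    ultimately show ?case using rmult by simp
  qed
qed

lemma sum_times_class_sum_subgroup:
  assumes "subgroup H G"
  shows "(\<Sum>q\<in>carrier G. f q * class_sum H q) = (\<Sum>q\<in>H. f q)"
    and "(\<Sum>q\<in>carrier G. class_sum H q * f q) = (\<Sum>q\<in>H. f q)"
  using sum.inter_restrict[OF finite_carrier, of f H, symmetric] subgroup.subset[OF assms]
  by (simp_all add: class_sum_def if_distrib if_distribR Int_absorb1 cong: if_cong)

lemma ga_mult_class_sum_subgroup_right:
  assumes "subgroup H G" "\<And>g. g \<in> carrier G \<Longrightarrow> (\<Sum>h\<in>H. u (g \<otimes> h)) = 0"
  shows "ga_mult (carrier G) (\<otimes>) u (class_sum H) = (\<lambda>w. 0)"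
proof
  fix w
  show "ga_mult (carrier G) (\<otimes>) u (class_sum H) w = 0"
  proof (cases "w \<in> carrier G")
    case True
    have "ga_mult (carrier G) (\<otimes>) u (class_sum H) w = (\<Sum>h\<in>H. u (w \<otimes> inv h))"
      using True assms(1) by (simp add: ga_mult_eq_sum_right sum_times_class_sum_subgroup)
    also have "\<dots> = (\<Sum>h\<in>H. u (w \<otimes> h))"
      using assms(1) by (rule sum_subgroup_inv)
    finally show ?thesis using assms(2) True by simp
  qed (simp add: ga_mult_outside)
qed

lemma ga_mult_class_sum_subgroup_left:
  assumes "H \<lhd> G" "\<And>g. g \<in> carrier G \<Longrightarrow> (\<Sum>h\<in>H. u (g \<otimes> h)) = 0"
  shows "ga_mult (carrier G) (\<otimes>) (class_sum H) u = (\<lambda>w. 0)"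
proof
  fix w
  have sub: "subgroup H G" using assms(1) by (rule normal_imp_subgroup)
  show "ga_mult (carrier G) (\<otimes>) (class_sum H) u w = 0"
  proof (cases "w \<in> carrier G")
    case True
    have "ga_mult (carrier G) (\<otimes>) (class_sum H) u w = (\<Sum>h\<in>H. u (inv h \<otimes> w))"
      using True sub by (simp add: ga_mult_eq_sum_left sum_times_class_sum_subgroup)
    also have "\<dots> = (\<Sum>h\<in>H. u (h \<otimes> w))"
      using sub by (rule sum_subgroup_inv)
    also have "\<dots> = (\<Sum>h\<in>H. u (w \<otimes> h))"
      using assms(1) True by (rule sum_normal_subgroup_commute)
    finally show ?thesis using assms(2) True by simp
  qed (simp add: ga_mult_outside)
qed

text \<open>With the idempotent \<open>e = |H|\<inverse> \<Sum>H\<close>, the element \<open>h (1 - e)\<close> lies in \<open>\<Delta>(G,H)\<close> and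
  \<open>e\<close> annihilates \<open>\<Delta>(G,H)\<close> from both sides, so \<open>z h = z h (1 - e) = h (1 - e) z = h z\<close>.\<close>
lemma central_Delta_commutes_with_ga_elem:
  fixes z :: "'a \<Rightarrow> 'k::field"
  assumes normal: "H \<lhd> G" and card_H: "of_nat (card H) \<noteq> (0::'k)"
    and z: "z \<in> ga_center (carrier G) (\<otimes>) (Delta (carrier G) (\<otimes>) \<one> H)" and h: "h \<in> carrier G"
  shows "ga_mult (carrier G) (\<otimes>) z (ga_elem h) = ga_mult (carrier G) (\<otimes>) (ga_elem h) z"
proof -
  let ?mult = "ga_mult (carrier G) (\<otimes>)" and ?Delta = "Delta (carrier G) (\<otimes>) \<one> H"
  have sub: "subgroup H G" using normal by (rule normal_imp_subgroup)
  have HG: "H \<subseteq> carrier G" and fin_H: "finite H"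
    using subgroup.subset[OF sub] finite_carrier finite_subset by auto
  have h_alg: "ga_elem h \<in> grp_alg (carrier G)" using h by (auto simp: grp_alg_def ga_elem_def)
  define c where "c = inverse (of_nat (card H) :: 'k)"
  define e where "e = (\<lambda>w. ga_elem \<one> w - c * class_sum H w)"
  have "e = (\<lambda>w. (- c) * (\<Sum>h'\<in>H. ga_elem h' w - ga_elem \<one> w))"
    using card_H fin_H by (auto simp: e_def c_def class_sum_def ga_elem_def sum_subtractf field_simps)
  also have "\<dots> \<in> ?Delta"
    using HG fin_H by (intro Delta_scale Delta_sum) (auto intro: Delta.gen)
  finally have "?mult (ga_elem h) e \<in> ?Delta"
    by (rule Delta.lmult[OF h_alg])
  then have commute: "?mult z (?mult (ga_elem h) e) = ?mult (?mult (ga_elem h) e) z"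
    using z by (simp add: ga_center_def)
  have z_Delta: "z \<in> ?Delta" using z by (simp add: ga_center_def)
  then have zh_Delta: "?mult z (ga_elem h) \<in> ?Delta" by (rule Delta.rmult[OF h_alg])
  have "?mult z (?mult (ga_elem h) e) = ?mult (?mult z (ga_elem h)) e"
    by (simp add: ga_mult_assoc)
  also have "\<dots> = ?mult z (ga_elem h)"
    using ga_mult_class_sum_subgroup_right[OF sub Delta_coset_sum_eq_zero[OF normal zh_Delta]]
    by (intro ext) (simp add: e_def ga_mult_diff_right ga_mult_scale_right ga_mult_one_right
        ga_mult_in_grp_alg)
  finally have left: "?mult z (?mult (ga_elem h) e) = ?mult z (ga_elem h)" .
  have "?mult e z = z"
    using ga_mult_class_sum_subgroup_left[OF normal Delta_coset_sum_eq_zero[OF normal z_Delta]]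
      Delta_subset_grp_alg[OF HG] z_Delta
    by (intro ext) (auto simp: e_def ga_mult_diff_left ga_mult_scale_left ga_mult_one_left)
  then have right: "?mult (?mult (ga_elem h) e) z = ?mult (ga_elem h) z"
    by (simp add: ga_mult_assoc)
  show ?thesis using commute left right by simp
qed

theorem center_Delta_eq_class_functions:
  assumes "H \<lhd> G" "of_nat (card H) \<noteq> (0::'k::field)"
  shows "ga_center (carrier G) (\<otimes>) (Delta (carrier G) (\<otimes>) \<one> H :: ('a \<Rightarrow> 'k) set)
    = {z \<in> Delta (carrier G) (\<otimes>) \<one> H. class_function G z}"
  using assms central_Delta_commutes_with_ga_elem class_function_if_commutes_with_ga_elem
    class_function_central unfolding ga_center_def by blast

lemma class_function_eq_zero_if_coset_conj:
  fixes z :: "'a \<Rightarrow> 'k::field"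
  assumes "class_function G z" "g \<in> carrier G" "(\<Sum>h\<in>H. z (g \<otimes> h)) = 0"
    "\<And>h. h \<in> H \<Longrightarrow> g \<otimes> h \<in> conj_class (carrier G) (\<otimes>) g" "of_nat (card H) \<noteq> (0::'k)"
  shows "z g = 0"
proof -
  have "(\<Sum>h\<in>H. z (g \<otimes> h)) = (\<Sum>h\<in>H. z g)"
    using assms(1,2,4) class_function_eq_on_conj_class by (intro sum.cong) auto
  then show ?thesis using assms(3,5) by simp
qed

lemma Delta_class_function_eq_zero:
  fixes z :: "'a \<Rightarrow> 'k::field"
  assumes normal: "H \<lhd> G" and card_H: "of_nat (card H) \<noteq> (0::'k)"
    and card_classes: "\<And>g. g \<in> H - {\<one>} \<Longrightarrow> of_nat (card (conj_class (carrier G) (\<otimes>) g)) = (0::'k)"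
    and cosets_conj: "\<And>g h. g \<in> carrier G - H \<Longrightarrow> h \<in> H \<Longrightarrow> g \<otimes> h \<in> conj_class (carrier G) (\<otimes>) g"
    and z: "z \<in> Delta (carrier G) (\<otimes>) \<one> H" "class_function G z"
    and w: "w \<notin> H - {\<one>}"
  shows "z w = 0"
proof -
  have sub: "subgroup H G" using normal by (rule normal_imp_subgroup)
  have HG: "H \<subseteq> carrier G" using sub by (rule subgroup.subset)
  have coset_sums: "(\<Sum>h\<in>H. z (g \<otimes> h)) = 0" if "g \<in> carrier G" for g
    using Delta_coset_sum_eq_zero[OF normal z(1) that] .
  consider "w \<notin> carrier G" | "w \<in> carrier G - H" | "w = \<one>" using w HG by blast
  then show ?thesis
  proof cases
    case 1
    then show ?thesis using z(1) Delta_subset_grp_alg[OF HG] by (auto simp: grp_alg_def)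
  next
    case 2
    then show ?thesis
      using class_function_eq_zero_if_coset_conj[OF z(2) _ coset_sums cosets_conj card_H] by blast
  next
    case 3
    have "(\<Sum>h\<in>H. z h) = 0" using coset_sums[of \<one>] HG by (simp add: subset_iff)
    moreover have "(\<Sum>h\<in>H - {\<one>}. z h) = 0"
      using HG conj_class_subset_normal[OF normal] card_classes z(2)
      by (intro sum_class_function_eq_zero) auto
    moreover have "finite H" using HG finite_carrier finite_subset by blast
    ultimately show ?thesis
      using 3 sum.remove[OF _ subgroup.one_closed[OF sub], of z] by simp
  qed
qed

lemma span_class_sums_subset_Delta:
  assumes normal: "H \<lhd> G"
    and card_classes: "\<And>g. g \<in> H - {\<one>} \<Longrightarrow> of_nat (card (conj_class (carrier G) (\<otimes>) g)) = (0::'k::comm_ring_1)"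
  shows "ga_span {C. \<exists>g\<in>H - {\<one>}. C = conj_class (carrier G) (\<otimes>) g} class_sum
    \<subseteq> {z \<in> Delta (carrier G) (\<otimes>) \<one> H :: ('a \<Rightarrow> 'k) set. class_function G z}"
proof
  let ?Cls = "{C. \<exists>g\<in>H - {\<one>}. C = conj_class (carrier G) (\<otimes>) g}"
  have HG: "H \<subseteq> carrier G" using normal normal_imp_subgroup subgroup.subset by blast
  fix f :: "'a \<Rightarrow> 'k" assume "f \<in> ga_span ?Cls class_sum"
  then obtain c where f: "f = (\<lambda>w. \<Sum>C\<in>?Cls. c C * class_sum C w)"
    unfolding ga_span_def by blast
  have "(class_sum C :: 'a \<Rightarrow> 'k) \<in> Delta (carrier G) (\<otimes>) \<one> H" if C: "C \<in> ?Cls" for C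
  proof -
    obtain g where g: "g \<in> H - {\<one>}" "C = conj_class (carrier G) (\<otimes>) g" using C by blast
    have "C \<subseteq> H" using conj_class_subset_normal[OF normal g(1)] g(2) by blast
    then show ?thesis
      using finite_conj_class card_classes[OF g(1)] g(2) by (intro class_sum_in_Delta) simp_all
  qed
  then have "f \<in> Delta (carrier G) (\<otimes>) \<one> H"
    unfolding f using HG finite_conj_classes[of "H - {\<one>}"] by (intro Delta_sum Delta_scale) auto
  moreover have "class_function G f"
    unfolding f using HG by (intro class_function_lincomb) (auto intro: class_function_class_sum_conj_class)
  ultimately show "f \<in> {z \<in> Delta (carrier G) (\<otimes>) \<one> H. class_function G z}" by blast
qed

theorem center_Delta_eq_span_class_sums:
  assumes normal: "H \<lhd> G" and card_H: "of_nat (card H) \<noteq> (0::'k::field)"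
    and card_classes: "\<And>g. g \<in> H - {\<one>} \<Longrightarrow> of_nat (card (conj_class (carrier G) (\<otimes>) g)) = (0::'k)"
    and cosets_conj: "\<And>g h. g \<in> carrier G - H \<Longrightarrow> h \<in> H \<Longrightarrow> g \<otimes> h \<in> conj_class (carrier G) (\<otimes>) g"
  shows "ga_center (carrier G) (\<otimes>) (Delta (carrier G) (\<otimes>) \<one> H :: ('a \<Rightarrow> 'k) set)
    = ga_span {C. \<exists>g\<in>H - {\<one>}. C = conj_class (carrier G) (\<otimes>) g} class_sum"
proof -
  have HG: "H - {\<one>} \<subseteq> carrier G" using normal normal_imp_subgroup subgroup.subset by blast
  have "{z \<in> Delta (carrier G) (\<otimes>) \<one> H. class_function G z}
      \<subseteq> ga_span {C. \<exists>g\<in>H - {\<one>}. C = conj_class (carrier G) (\<otimes>) g} (class_sum :: _ \<Rightarrow> 'a \<Rightarrow> 'k)"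
    using Delta_class_function_eq_zero[OF normal card_H card_classes cosets_conj]
      class_function_in_span_class_sums[OF HG conj_class_subset_normal[OF normal]] by blast
  then show ?thesis
    using span_class_sums_subset_Delta[OF normal card_classes] center_Delta_eq_class_functions[OF normal card_H]
    by blast
qed

end

section \<open>The group \<open>T\<^sub>3\<^sub>m\<close>\<close>

lemma power_mod_3_cong:
  fixes t m :: int
  assumes "[t ^ 3 = 1] (mod m)"
  shows "[t ^ (n mod 3) = t ^ n] (mod m)"
proof -
  have "[(t ^ 3) ^ (n div 3) * t ^ (n mod 3) = 1 ^ (n div 3) * t ^ (n mod 3)] (mod m)"
    by (intro cong_mult cong_pow assms cong_refl)
  moreover have "t ^ n = (t ^ 3) ^ (n div 3) * t ^ (n mod 3)"
    by (simp add: power_mult[symmetric] power_add[symmetric])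
  ultimately show ?thesis by (simp add: cong_sym)
qed

definition T_grp :: "int \<Rightarrow> int \<Rightarrow> (int \<times> int) monoid" where
  "T_grp m t = \<lparr>carrier = T_carrier m, monoid.mult = T_mult m t, one = T_one\<rparr>"

lemma T_grp_simps [simp]:
  "carrier (T_grp m t) = T_carrier m" "monoid.mult (T_grp m t) = T_mult m t" "one (T_grp m t) = T_one"
  by (simp_all add: T_grp_def)

lemma T_mult_Pair: "T_mult m t (a, b) (c, d) = ((a * t ^ nat d + c) mod m, (b + d) mod 3)"
  by (simp add: T_mult_def)
lemma mem_T_carrier: "(a, b) \<in> T_carrier m \<longleftrightarrow> 0 \<le> a \<and> a < m \<and> 0 \<le> b \<and> b < 3"
  by (simp add: T_carrier_def)

locale T_group =
  fixes m t :: int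
  assumes m_pos: "0 < m" and t_cube: "[t ^ 3 = 1] (mod m)"
begin

lemma T_mult_assoc:
  assumes "y \<in> T_carrier m" "z \<in> T_carrier m"
  shows "T_mult m t (T_mult m t x y) z = T_mult m t x (T_mult m t y z)"
proof -
  obtain a b c d e f where xyz: "x = (a, b)" "y = (c, d)" "z = (e, f)" by (metis prod.exhaust)
  have df: "0 \<le> d" "0 \<le> f" using assms xyz by (auto simp: mem_T_carrier)
  have "nat ((d + f) mod 3) = (nat d + nat f) mod 3" using df by (simp add: nat_mod_distrib nat_add_distrib)
  then have "[t ^ nat ((d + f) mod 3) = t ^ nat d * t ^ nat f] (mod m)"
    using power_mod_3_cong[OF t_cube, of "nat d + nat f"] by (simp add: power_add)
  then have "[a * t ^ nat ((d + f) mod 3) + (c * t ^ nat f + e) mod m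
      = a * (t ^ nat d * t ^ nat f) + (c * t ^ nat f + e)] (mod m)"
    by (intro cong_add cong_mult cong_refl) (simp_all add: cong_def)
  moreover have "[(a * t ^ nat d + c) mod m * t ^ nat f + e = (a * t ^ nat d + c) * t ^ nat f + e] (mod m)"
    by (intro cong_add cong_mult cong_refl) (simp add: cong_def)
  moreover have "(a * t ^ nat d + c) * t ^ nat f + e = a * (t ^ nat d * t ^ nat f) + (c * t ^ nat f + e)"
    by (simp add: algebra_simps)
  ultimately have "((a * t ^ nat d + c) mod m * t ^ nat f + e) mod m
      = (a * t ^ nat ((d + f) mod 3) + (c * t ^ nat f + e) mod m) mod m"
    unfolding cong_def by simp
  moreover have "((b + d) mod 3 + f) mod 3 = (b + (d + f) mod 3) mod 3"
    by (simp only: mod_add_left_eq mod_add_right_eq add.assoc)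
  ultimately show ?thesis unfolding xyz T_mult_Pair by (simp only: prod.inject)
qed

text \<open>The inverse of \<open>y^b x^a\<close> is \<open>y^(-b) x^(-a t^(2b))\<close>, as \<open>t^(2b)\<close> inverts \<open>t^b\<close> modulo \<open>m\<close>.\<close>
lemma T_left_inverse:
  assumes "x \<in> T_carrier m"
  shows "\<exists>y\<in>T_carrier m. T_mult m t y x = T_one"
proof -
  obtain a b where x: "x = (a, b)" by (metis prod.exhaust)
  have "[(- a * t ^ (2 * nat b)) mod m * t ^ nat b + a = (- a * t ^ (2 * nat b)) * t ^ nat b + a] (mod m)"
    by (intro cong_add cong_mult cong_refl) (simp add: cong_def)
  also have "(- a * t ^ (2 * nat b)) * t ^ nat b = - a * (t ^ (2 * nat b) * t ^ nat b)"
    by (simp only: mult.assoc)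
  also have "t ^ (2 * nat b) * t ^ nat b = (t ^ 3) ^ nat b"
    by (simp add: power_add[symmetric] power_mult[symmetric])
  also have "[- a * (t ^ 3) ^ nat b + a = - a * 1 ^ nat b + a] (mod m)"
    by (intro cong_add cong_mult cong_pow t_cube cong_refl)
  finally have "((- a * t ^ (2 * nat b)) mod m * t ^ nat b + a) mod m = 0"
    by (simp add: cong_def)
  then have "T_mult m t ((- a * t ^ (2 * nat b)) mod m, (- b) mod 3) x = T_one"
    by (simp add: x T_mult_Pair T_one_def mod_add_left_eq)
  moreover have "((- a * t ^ (2 * nat b)) mod m, (- b) mod 3) \<in> T_carrier m"
    using m_pos by (simp add: mem_T_carrier)
  ultimately show ?thesis by blast
qed

lemma group_T_grp: "group (T_grp m t)"
proof (rule groupI)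
  show "\<one>\<^bsub>T_grp m t\<^esub> \<in> carrier (T_grp m t)" using m_pos by (simp add: T_one_def mem_T_carrier)
next
  fix x y assume "x \<in> carrier (T_grp m t)" "y \<in> carrier (T_grp m t)"
  show "x \<otimes>\<^bsub>T_grp m t\<^esub> y \<in> carrier (T_grp m t)"
    using m_pos by (cases x, cases y) (simp add: T_mult_Pair mem_T_carrier)
next
  fix x y z assume "x \<in> carrier (T_grp m t)" "y \<in> carrier (T_grp m t)" "z \<in> carrier (T_grp m t)"
  then show "x \<otimes>\<^bsub>T_grp m t\<^esub> y \<otimes>\<^bsub>T_grp m t\<^esub> z = x \<otimes>\<^bsub>T_grp m t\<^esub> (y \<otimes>\<^bsub>T_grp m t\<^esub> z)"
    by (simp add: T_mult_assoc)
next
  fix x assume "x \<in> carrier (T_grp m t)"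
  then show "\<one>\<^bsub>T_grp m t\<^esub> \<otimes>\<^bsub>T_grp m t\<^esub> x = x"
    by (cases x) (simp add: T_mult_Pair T_one_def mem_T_carrier)
next
  fix x assume "x \<in> carrier (T_grp m t)"
  then show "\<exists>y\<in>carrier (T_grp m t). y \<otimes>\<^bsub>T_grp m t\<^esub> x = \<one>\<^bsub>T_grp m t\<^esub>"
    by (simp add: T_left_inverse)
qed

sublocale finite_group "T_grp m t"
  by (intro finite_group.intro group_T_grp) (simp add: finite_group_axioms_def T_carrier_def)

lemma T_H_eq: "T_H m t = {0..<m} \<times> {0}"
proof -
  have powers: "(T_mult m t (T_x m) ^^ n) T_one = (int n mod m, 0)" for n
    by (induction n) (simp_all add: T_one_def T_x_def T_mult_Pair mod_simps add.commute)
  have "range (\<lambda>n::nat. (int n mod m, 0::int)) = {0..<m} \<times> {0}"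
  proof (intro equalityI subsetI)
    fix p :: "int \<times> int" assume "p \<in> {0..<m} \<times> {0}"
    then have "p = (int (nat (fst p)) mod m, 0)" by auto
    then show "p \<in> range (\<lambda>n::nat. (int n mod m, 0::int))" by blast
  qed (use m_pos in auto)
  then show ?thesis unfolding T_H_def powers .
qed

lemma snd_hom: "snd \<in> hom (T_grp m t) (integer_mod_group 3)"
  by (auto simp: hom_def T_carrier_def T_mult_def carrier_integer_mod_group)

lemma T_H_eq_kernel: "T_H m t = kernel (T_grp m t) (integer_mod_group 3) snd"
  by (auto simp: T_H_eq kernel_def T_carrier_def)

lemma normal_T_H: "T_H m t \<lhd> T_grp m t"
proof -
  interpret group_hom "T_grp m t" "integer_mod_group 3" snd
    by (intro group_hom.intro group_hom_axioms.intro group_T_grp group_integer_mod_group snd_hom)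
  show ?thesis unfolding T_H_eq_kernel by (rule normal_kernel)
qed

lemma card_T_H: "card (T_H m t) = nat m"
  by (simp add: T_H_eq card_cartesian_product)

end

locale T_group_coprime = T_group +
  assumes coprime_t_minus_1: "coprime m (t - 1)"
begin

lemma coprime_t: "coprime t m"
proof -
  have "[t * t\<^sup>2 = 1] (mod m)" using t_cube by (simp add: power2_eq_square power3_eq_cube mult.assoc)
  then show ?thesis using coprime_iff_invertible_int by blast
qed

lemma coprime_power_minus_1:
  assumes "0 < n" "n < 3"
  shows "coprime (t ^ n - 1) m"
proof -
  have t_minus_1: "coprime (t - 1) m" using coprime_t_minus_1 by (simp add: coprime_commute)
  have "t ^ 3 - 1 = (t - 1) * (t\<^sup>2 + t + 1)" by (simp add: algebra_simps power2_eq_square power3_eq_cube)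
  then have "m dvd (t - 1) * (t\<^sup>2 + t + 1)" using t_cube by (simp add: cong_iff_dvd_diff)
  then have "m dvd - (t\<^sup>2 + t + 1)"
    using t_minus_1 by (simp only: dvd_minus_iff coprime_dvd_mult_right_iff coprime_commute)
  moreover have "(t + 1) * (- t) - 1 = - (t\<^sup>2 + t + 1)" by (simp add: algebra_simps power2_eq_square)
  ultimately have "[(t + 1) * (- t) = 1] (mod m)" by (simp only: cong_iff_dvd_diff)
  then have "coprime (t + 1) m" using coprime_iff_invertible_int by blast
  moreover have "t\<^sup>2 - 1 = (t - 1) * (t + 1)" by (simp add: algebra_simps power2_eq_square)
  ultimately have "coprime (t\<^sup>2 - 1) m" using t_minus_1 by simp
  moreover have "n = 1 \<or> n = 2" using assms by auto
  ultimately show ?thesis using t_minus_1 by auto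
qed

lemma T_H_elem_conjugates_distinct:
  assumes "b1 < b2" "b2 < 3" "0 < j" "j < m"
  shows "j * t ^ b1 mod m \<noteq> j * t ^ b2 mod m"
proof
  assume "j * t ^ b1 mod m = j * t ^ b2 mod m"
  then have "m dvd j * t ^ b2 - j * t ^ b1" by (simp add: mod_eq_dvd_iff dvd_diff_commute)
  moreover have "j * t ^ b2 - j * t ^ b1 = j * (t ^ b1 * (t ^ (b2 - b1) - 1))"
    using assms(1) by (simp add: algebra_simps flip: power_add)
  moreover have "coprime (t ^ b1 * (t ^ (b2 - b1) - 1)) m"
    using assms coprime_t coprime_power_minus_1[of "b2 - b1"] by simp
  ultimately have "m dvd j" by (simp add: coprime_dvd_mult_left_iff ac_simps)
  then show False using assms(3,4) zdvd_imp_le by fastforce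
qed

lemma conj_class_T_H_elem:
  assumes "0 < j" "j < m"
  shows "conj_class (T_carrier m) (T_mult m t) (j, 0) = (\<lambda>b. (j * t ^ b mod m, 0)) ` {..<3}"
proof (intro equalityI subsetI)
  fix u assume "u \<in> conj_class (T_carrier m) (T_mult m t) (j, 0)"
  then obtain u1 u2 h1 h2 where u: "u = (u1, u2)" "(u1, u2) \<in> T_carrier m" "(h1, h2) \<in> T_carrier m"
    and eq: "T_mult m t (h1, h2) (u1, u2) = T_mult m t (j, 0) (h1, h2)"
    unfolding conj_class_def by (cases u) auto
  have bounds: "0 \<le> h2" "h2 < 3" "0 \<le> u2" "u2 < 3" "0 \<le> u1" "u1 < m"
    using u by (simp_all add: mem_T_carrier)
  have second: "(h2 + u2) mod 3 = h2"
    and first: "(h1 * t ^ nat u2 + u1) mod m = (j * t ^ nat h2 + h1) mod m"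
    using eq u(3) by (simp_all add: T_mult_Pair mem_T_carrier)
  have "u2 = 0" using second bounds(1-4) by presburger
  with first have "[h1 + u1 = h1 + j * t ^ nat h2] (mod m)" by (simp add: cong_def add.commute)
  then have "[u1 = j * t ^ nat h2] (mod m)" by (simp only: cong_add_lcancel)
  then have "u1 = j * t ^ nat h2 mod m" using bounds by (simp add: cong_def)
  with \<open>u2 = 0\<close> show "u \<in> (\<lambda>b. (j * t ^ b mod m, 0)) ` {..<3}"
    using u \<open>h2 < 3\<close> by (auto intro!: image_eqI[of _ _ "nat h2"])
next
  fix u :: "int \<times> int" assume "u \<in> (\<lambda>b. (j * t ^ b mod m, 0)) ` {..<3}"
  then obtain b :: nat where b: "b < 3" "u = (j * t ^ b mod m, 0)" by blast
  have "T_mult m t (0, int b) u = T_mult m t (j, 0) (0, int b)"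
    using b by (simp add: T_mult_Pair)
  moreover have "(0, int b) \<in> T_carrier m" "u \<in> T_carrier m"
    using b m_pos by (simp_all add: mem_T_carrier)
  ultimately show "u \<in> conj_class (T_carrier m) (T_mult m t) (j, 0)"
    unfolding conj_class_def by blast
qed

lemma card_conj_class_T_H:
  assumes "g \<in> T_H m t - {T_one}"
  shows "card (conj_class (T_carrier m) (T_mult m t) g) = 3"
proof -
  obtain j where j: "g = (j, 0)" "0 < j" "j < m"
    using assms by (force simp: T_H_eq T_one_def)
  have "inj_on (\<lambda>b. (j * t ^ b mod m, 0::int)) {..<3}"
    using T_H_elem_conjugates_distinct[OF _ _ j(2,3)] by (auto simp: inj_on_def) (metis linorder_neqE_nat)
  then show ?thesis by (simp add: j conj_class_T_H_elem card_image)
qed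

text \<open>Conjugating \<open>y^b x^a\<close> by \<open>x^s\<close> gives \<open>y^b x^(a + s(1 - t^b))\<close>; since \<open>t^b - 1\<close> is a unit
  modulo \<open>m\<close>, this reaches the whole coset.\<close>
lemma coset_subset_conj_class:
  assumes g: "g \<in> T_carrier m - T_H m t" and h: "h \<in> T_H m t"
  shows "T_mult m t g h \<in> conj_class (T_carrier m) (T_mult m t) g"
proof -
  obtain a b c where gh: "g = (a, b)" "h = (c, 0)" "0 \<le> a" "a < m" "0 < b" "b < 3" "0 \<le> c" "c < m"
    using g h by (cases g) (auto simp: T_H_eq mem_T_carrier)
  obtain s where s: "[(t ^ nat b - 1) * s = 1] (mod m)"
    using coprime_power_minus_1[of "nat b"] gh(5,6) cong_solve_coprime_int by fastforce
  define x where "x = (- c * s) mod m"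
  have "[x * (t ^ nat b - 1) = - c * ((t ^ nat b - 1) * s)] (mod m)"
    unfolding x_def by (rule cong_trans[of _ "(- c * s) * (t ^ nat b - 1)"])
      (simp_all add: cong_def mod_simps ac_simps)
  also have "[- c * ((t ^ nat b - 1) * s) = - c * 1] (mod m)"
    by (intro cong_mult cong_refl s)
  finally have "(x * t ^ nat b + (a + c) mod m) mod m = (a + x) mod m"
    by (simp add: cong_iff_dvd_diff mod_eq_dvd_iff algebra_simps mod_simps)
  then have "T_mult m t (x, 0) (T_mult m t g h) = T_mult m t g (x, 0)"
    using gh by (simp add: T_mult_Pair)
  moreover have "(x, 0) \<in> T_carrier m" "T_mult m t g h \<in> T_carrier m"
    using m_pos gh by (simp_all add: x_def mem_T_carrier T_mult_Pair)
  ultimately show ?thesis unfolding conj_class_def by blast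
qed

lemma card_T_H_conj_classes:
  "3 * card {C. \<exists>g\<in>T_H m t - {T_one}. C = conj_class (T_carrier m) (T_mult m t) g} = nat m - 1"
proof -
  have H: "T_H m t \<subseteq> T_carrier m" "T_one \<in> T_H m t"
    using m_pos by (auto simp: T_H_eq T_carrier_def T_one_def)
  have "3 * card {C. \<exists>g\<in>T_H m t - {T_one}. C = conj_class (T_carrier m) (T_mult m t) g}
      = card (T_H m t - {T_one})"
    using card_conj_classes[of "T_H m t - {T_one}" 3] H(1) card_conj_class_T_H
      conj_class_subset_normal[OF normal_T_H] by auto
  also have "\<dots> = nat m - 1" using H(2) by (simp add: card_T_H)
  finally show ?thesis .
qed

lemma center_Delta_T_eq_span:
  assumes "of_int m \<noteq> (0::'k::field)" "(3::'k) = 0"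
  shows "ga_center (T_carrier m) (T_mult m t)
      (Delta (T_carrier m) (T_mult m t) T_one (T_H m t) :: (int \<times> int \<Rightarrow> 'k) set)
    = ga_span {C. \<exists>g\<in>T_H m t - {T_one}. C = conj_class (T_carrier m) (T_mult m t) g} class_sum"
  using center_Delta_eq_span_class_sums[OF normal_T_H] assms m_pos card_T_H card_conj_class_T_H
    coset_subset_conj_class by simp

end

theorem proposition3p12:
  fixes k :: nat and m t :: int
  assumes "CHAR('a::{field,finite}) = 3"
    and "m = 3 * int k + 1"
    and "[t ^ 3 = 1] (mod m)"
    and "gcd m (t - 1) = 1"
  defines "G \<equiv> T_carrier m" and "gmult \<equiv> T_mult m t" and "H \<equiv> T_H m t"
  defines "Cls \<equiv> {C. \<exists>g \<in> H - {T_one}. C = conj_class G gmult g}"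
  shows "card Cls = k \<and>
    ga_center G gmult (Delta G gmult T_one H :: ((int \<times> int) \<Rightarrow> 'a) set)
      = ga_span Cls class_sum"
proof -
  interpret T_group_coprime m t
    using assms(2-4) by unfold_locales (simp_all add: coprime_iff_gcd_eq_1)
  have three: "(3::'a) = 0" using of_nat_CHAR[where 'a = 'a] assms(1) by simp
  have "of_int m = (1::'a)" using assms(2) three by simp
  then have "ga_center G gmult (Delta G gmult T_one H :: ((int \<times> int) \<Rightarrow> 'a) set) = ga_span Cls class_sum"
    using center_Delta_T_eq_span[where 'k = 'a] three by (simp add: G_def gmult_def H_def Cls_def)
  moreover have "card Cls = k"
    using card_T_H_conj_classes assms(2) by (simp add: Cls_def G_def gmult_def H_def nat_add_distrib)
  ultimately show ?thesis by simp
qed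

end
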